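(* Fix integers $n\ge 1$, $p\ge 3$ and a node $i\in\{1,\dots,p\}$. Let $\mathbf X_{-i}\in\mathbb R^{n\times(p-1)}$ be a random design matrix and $\mathbf X_i\in\mathbb R^n$ a response satisfying the nodewise Gaussian regression model \[ \mathbf X_i=\mathbf X_{-i}\beta_i^\star+\varepsilon_i,\qquad \varepsilon_i\sim\mathcal N(0,\sigma_i^2 I_n), \] with $\varepsilon_i$ independent of $\mathbf X_{-i}$, where $\beta_i^\star\in\mathbb R^{p-1}$ (coordinates indexed by $j\neq i$) is the true coefficient vector, and $K_{ii}>0$ is a known fixed constant with $\sigma_i^2=1/K_{ii}$. Let $\xi_0>0$ and $\sigma_1>0$ be hyperparameters, and let $(p_{ij})_{j\neq i}\subset[0,1]$ be deterministic weights (treated as fixed). Define the nodewise adaptive elastic-net estimator \[ \widehat\beta_i\in\arg\min_{\beta\in\mathbb R^{p-1}}\Big\{\frac{1}{2\sigma_i^2}\|\mathbf X_i-\mathbf X_{-i}\beta\|_2^2+\sum_{j\neq i}P_{1,ij}|\beta_{j}|+\sum_{j\neq i}P_{2,ij}\beta_{j}^2\Big\}, \] with $P_{1,ij}=\xi_0(1-p_{ij})|K_{ii}|$ and $P_{2,ij}=\frac{1}{2\sigma_1^2}p_{ij}K_{ii}^2$. Let $S_i=\{j\neq i:\beta^\star_{ij}\neq 0\}$, $s_i=|S_i|$, $\overline p_i=\max_{j\in S_i^c}p_{ij}$, $\underline p_i=\min_{j\in S_i}p_{ij}$. Assume: (A1) (Sub-Gaussian design) The rows of $\mathbf X_{-i}$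 are independent copies of a centered random vector in $\mathbb R^{p-1}$ with covariance matrix $\Sigma_{-i,-i}$; there is a constant $\sigma_X>0$, uniform in $n,p$, such that for every unit vector $v\in\mathbb R^{p-1}$ and every $t\in\mathbb R$, $\mathbb E[\exp(t\langle \mathbf X^{(1)}_{-i},v\rangle)]\le\exp(t^2\sigma_X^2/2)$, where $\mathbf X^{(1)}_{-i}$ is a generic row; and $0<\underline\kappa\le\lambda_{\min}(\Sigma_{-i,-i})\le\lambda_{\max}(\Sigma_{-i,-i})\le\overline\kappa<\infty$. (A2) (Sparsity and bounded signal) $\beta_i^\star$ is sparse with support $S_i$ and $\max_{j\in S_i}|\beta^\star_{ij}|\le B$ for a constant $B>0$ uniform in $n,p$. (A3) (Separation of weights) $\overline p_i<1/2$. (A4) (Compatibility) With $L_i=\frac{5-2\underline p_i}{1-2\overline p_i}$, there is a constant $\phi_i>0$, uniform in $n,p$, such that for every $\delta\in\mathbb R^{p-1}$ with $\|\delta_{S_i^c}\|_1\le L_i\|\delta_{S_i}\|_1$, \[ \|\mathbf X_{-i}\delta\|_2^2\ge\frac{n\phi_i^2}{s_i}\|\delta_{S_i}\|_1^2. \] Then there exist constants $C>0$ (sufficiently large) and $c>0$ such that, provided \[ \xi_0\ge C\sqrt{n\log p}\quad\text{and}\quad \xi_0\ge\frac{BK_{ii}}{\sigma_1^2}, \] with probability at least $1-2p^{-c}$ (conditionally on the fixed weights $(p_{ij})$), \[ \|\widehat\beta_i-\beta_i^\star\|_1\le C_i\,\frac{s_i\,\xi_0}{n}, \] where $C_i>0$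 depends only on $\phi_i$, $\underline p_i$ and $\overline p_i$.
   Context: This arises in a Gaussian graphical model: $X\sim\mathcal N(0,\Sigma)$ in $\mathbb R^p$ with precision matrix $K=\Sigma^{-1}$, $n$ i.i.d. observations forming $\mathbf X\in\mathbb R^{n\times p}$; $\mathbf X_i$ denotes the $i$th column and $\mathbf X_{-i}$ the matrix with that column removed. The regression coefficients are $\beta_i^\star=-K_{-i,i}/K_{ii}$ and $\sigma_i^2=1/K_{ii}$. The weights $p_{ij}$ are (variational) posterior edge-inclusion probabilities, fixed from a preceding step and treated as deterministic. $\delta_S$ denotes the restriction of a vector $\delta$ to coordinates in $S$, and $S^c$ the complement of $S$ within $\{j: j\neq i\}$. $\xi_0$ is the rate of a Laplace spike and $\sigma_1^2$ the variance of a Gaussian slab in a spike-and-slab prior. *)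

theory Defs
  imports "HOL-Probability.Probability"
begin

text \<open>Coordinates of vectors in R^(p-1) are indexed by J = {0..<p} - {i} (0-based nodes);
  vectors are functions nat => real and only their values on J matter.
  The data matrix is Xm :: nat => nat => real, entry (row r, column j).\<close>

definition other_idx :: "nat \<Rightarrow> nat \<Rightarrow> nat set" where
  "other_idx p i = {..<p} - {i}"

definition is_eigenvalue_on :: "nat set \<Rightarrow> (nat \<Rightarrow> nat \<Rightarrow> real) \<Rightarrow> real \<Rightarrow> bool" where
  "is_eigenvalue_on J A lam \<longleftrightarrow>
     (\<exists>v. (\<exists>j\<in>J. v j \<noteq> 0) \<and> (\<forall>j\<in>J. (\<Sum>k\<in>J. A j k * v k) = lam * v j))"

definition enet_obj ::
  "nat \<Rightarrow> nat \<Rightarrow> nat \<Rightarrow> real \<Rightarrow> real \<Rightarrow> real \<Rightarrow> (nat \<Rightarrow> real) \<Rightarrow> (nat \<Rightarrow> nat \<Rightarrow> real) \<Rightarrow> (nat \<Rightarrow> real) \<Rightarrow> real"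
  where
  "enet_obj n p i Kii xi0 sigma1 pw Xm \<beta> =
     1 / (2 * (1 / Kii)) * (\<Sum>r<n. (Xm r i - (\<Sum>j\<in>other_idx p i. Xm r j * \<beta> j))\<^sup>2)
     + (\<Sum>j\<in>other_idx p i. xi0 * (1 - pw j) * \<bar>Kii\<bar> * \<bar>\<beta> j\<bar>)
     + (\<Sum>j\<in>other_idx p i. (1 / (2 * sigma1\<^sup>2)) * pw j * Kii\<^sup>2 * (\<beta> j)\<^sup>2)"

definition is_enet_estimator ::
  "nat \<Rightarrow> nat \<Rightarrow> nat \<Rightarrow> real \<Rightarrow> real \<Rightarrow> real \<Rightarrow> (nat \<Rightarrow> real) \<Rightarrow> (nat \<Rightarrow> nat \<Rightarrow> real) \<Rightarrow> (nat \<Rightarrow> real) \<Rightarrow> bool"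
  where
  "is_enet_estimator n p i Kii xi0 sigma1 pw Xm \<beta> \<longleftrightarrow>
     (\<forall>\<beta>'. enet_obj n p i Kii xi0 sigma1 pw Xm \<beta> \<le> enet_obj n p i Kii xi0 sigma1 pw Xm \<beta>')"

definition supp_set :: "nat \<Rightarrow> nat \<Rightarrow> (nat \<Rightarrow> real) \<Rightarrow> nat set" where
  "supp_set p i \<beta> = {j \<in> other_idx p i. \<beta> j \<noteq> 0}"

definition pbar :: "nat \<Rightarrow> nat \<Rightarrow> (nat \<Rightarrow> real) \<Rightarrow> (nat \<Rightarrow> real) \<Rightarrow> real" where
  "pbar p i \<beta> pw = (if other_idx p i - supp_set p i \<beta> = {} then 0
                      else Max (pw ` (other_idx p i - supp_set p i \<beta>)))"

definition plow :: "nat \<Rightarrow> nat \<Rightarrow> (nat \<Rightarrow> real) \<Rightarrow> (nat \<Rightarrow> real) \<Rightarrow> real" where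
  "plow p i \<beta> pw = Min (pw ` supp_set p i \<beta>)"

end

(*
  Write delta = betahat - beta* and S for the support of beta*.  Comparing the objective at betahat
  with its value at beta* and dividing by K_ii gives the basic inequality
    |X delta|^2 / 2 <= eps' X delta + xi |delta_S|_1 - xi (1 - pbar) |delta_(S^c)|_1 :
  the ridge part of the penalty costs at most xi |delta_j| on S because xi >= B K_ii / sigma1^2,
  and off S the lasso weights are at least 1 - pbar.

  The noise term is controlled on an event of probability at least 1 - 2/p.  If n >= 4 log p, all
  correlations |X_j' eps| are at most xi/2 by a Chernoff bound for sums of products of sub-Gaussian
  and Gaussian variables (integrating out the design first); then delta lies in the cone of (A4),
  and the compatibility condition bounds |delta_S|_1 by 3 s xi / (n phi^2).  If n < 4 log p that
  Chernoff bound is useless, but a chi-square tail bound gives |eps|^2 <= xi^2 / n, and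
  eps' X delta <= |X delta|^2 / 4 + |eps|^2 closes the argument in the same way.
*)

theory Submission
  imports Defs
begin

lemma finite_other_idx [simp]: "finite (other_idx p i)"
  unfolding other_idx_def by simp

lemma supp_set_subset: "supp_set p i \<beta> \<subseteq> other_idx p i"
  unfolding supp_set_def by auto

lemma card_other_idx_le: "card (other_idx p i) \<le> p"
  unfolding other_idx_def using card_mono[of "{..<p}" "{..<p} - {i}"] by auto

lemma pw_le_pbar: "j \<in> other_idx p i - supp_set p i \<beta> \<Longrightarrow> pw j \<le> pbar p i \<beta> pw"
  unfolding pbar_def by (auto intro: Max_ge)

lemma pbar_nonneg:
  assumes "\<forall>j\<in>other_idx p i. 0 \<le> pw j"
  shows "0 \<le> pbar p i \<beta> pw"
proof (cases "other_idx p i - supp_set p i \<beta> = {}")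
  case False
  then obtain j where "j \<in> other_idx p i - supp_set p i \<beta>"
    by blast
  then show ?thesis
    using assms pw_le_pbar[of j p i \<beta> pw] by (meson DiffD1 order.trans)
qed (simp add: pbar_def)

lemma plow_le_one:
  assumes "supp_set p i \<beta> \<noteq> {}" "\<forall>j\<in>other_idx p i. pw j \<le> 1"
  shows "plow p i \<beta> pw \<le> 1"
proof -
  obtain j where j: "j \<in> supp_set p i \<beta>"
    using assms(1) by blast
  have "plow p i \<beta> pw \<le> pw j"
    unfolding plow_def using j finite_subset[OF supp_set_subset] by (intro Min_le) auto
  also have "\<dots> \<le> 1"
    using assms(2) j supp_set_subset by blast
  finally show ?thesis .
qed

section \<open>The basic inequality of the elastic net\<close>

definition enet_coord_penalty :: "real \<Rightarrow> real \<Rightarrow> real \<Rightarrow> real \<Rightarrow> real \<Rightarrow> real" where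
  "enet_coord_penalty Kii \<xi> \<sigma>1 w b = \<xi> * (1 - w) * \<bar>Kii\<bar> * \<bar>b\<bar> + 1 / (2 * \<sigma>1\<^sup>2) * w * Kii\<^sup>2 * b\<^sup>2"

definition enet_penalty :: "nat set \<Rightarrow> real \<Rightarrow> real \<Rightarrow> real \<Rightarrow> (nat \<Rightarrow> real) \<Rightarrow> (nat \<Rightarrow> real) \<Rightarrow> real" where
  "enet_penalty J Kii \<xi> \<sigma>1 pw \<beta> = (\<Sum>j\<in>J. enet_coord_penalty Kii \<xi> \<sigma>1 (pw j) (\<beta> j))"

lemma enet_obj_eq:
  "enet_obj n p i Kii \<xi> \<sigma>1 pw x \<beta> =
     Kii / 2 * (\<Sum>r<n. (x r i - (\<Sum>j\<in>other_idx p i. x r j * \<beta> j))\<^sup>2)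
     + enet_penalty (other_idx p i) Kii \<xi> \<sigma>1 pw \<beta>"
  unfolding enet_obj_def enet_penalty_def enet_coord_penalty_def by (simp add: sum.distrib)

lemma enet_coord_penalty_diff_le:
  assumes "Kii > 0" "\<sigma>1 > 0" "\<xi> \<ge> B * Kii / \<sigma>1\<^sup>2" "\<bar>a::real\<bar> \<le> B" "0 \<le> w" "w \<le> 1"
  shows "enet_coord_penalty Kii \<xi> \<sigma>1 w a - enet_coord_penalty Kii \<xi> \<sigma>1 w b \<le> Kii * \<xi> * \<bar>b - a\<bar>"
proof -
  have "0 \<le> B * Kii / \<sigma>1\<^sup>2"
    using assms by (intro divide_nonneg_pos mult_nonneg_nonneg) auto
  then have \<xi>: "\<xi> \<ge> 0"
    using assms(3) by linarith
  have lasso: "\<xi> * (1 - w) * Kii * (\<bar>a\<bar> - \<bar>b\<bar>) \<le> \<xi> * (1 - w) * Kii * \<bar>b - a\<bar>"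
    using assms \<xi> by (intro mult_left_mono) auto
  have "a\<^sup>2 - b\<^sup>2 = 2 * a * (a - b) - (b - a)\<^sup>2"
    by (simp add: power2_eq_square algebra_simps)
  also have "\<dots> \<le> \<bar>2 * a * (a - b)\<bar>"
    using zero_le_power2[of "b - a"] abs_ge_self[of "2 * a * (a - b)"] by linarith
  also have "\<dots> = 2 * \<bar>a\<bar> * \<bar>b - a\<bar>"
    by (simp add: abs_mult abs_minus_commute)
  also have "\<dots> \<le> 2 * B * \<bar>b - a\<bar>"
    using assms by (intro mult_right_mono) auto
  finally have "w * Kii\<^sup>2 / (2 * \<sigma>1\<^sup>2) * (a\<^sup>2 - b\<^sup>2) \<le> w * Kii\<^sup>2 / (2 * \<sigma>1\<^sup>2) * (2 * B * \<bar>b - a\<bar>)"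
    using assms by (intro mult_left_mono) auto
  also have "\<dots> = w * Kii * \<bar>b - a\<bar> * (B * Kii / \<sigma>1\<^sup>2)"
    using assms by (simp add: power2_eq_square field_simps)
  also have "\<dots> \<le> w * Kii * \<bar>b - a\<bar> * \<xi>"
    using assms by (intro mult_left_mono) auto
  finally have ridge: "w * Kii\<^sup>2 / (2 * \<sigma>1\<^sup>2) * (a\<^sup>2 - b\<^sup>2) \<le> w * Kii * \<bar>b - a\<bar> * \<xi>" .
  have "enet_coord_penalty Kii \<xi> \<sigma>1 w a - enet_coord_penalty Kii \<xi> \<sigma>1 w b
      = \<xi> * (1 - w) * Kii * (\<bar>a\<bar> - \<bar>b\<bar>) + w * Kii\<^sup>2 / (2 * \<sigma>1\<^sup>2) * (a\<^sup>2 - b\<^sup>2)"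
    using assms unfolding enet_coord_penalty_def by (simp add: field_simps)
  also have "\<dots> \<le> \<xi> * (1 - w) * Kii * \<bar>b - a\<bar> + w * Kii * \<bar>b - a\<bar> * \<xi>"
    using lasso ridge by linarith
  also have "\<dots> = Kii * \<xi> * \<bar>b - a\<bar>"
    by (simp add: algebra_simps)
  finally show ?thesis .
qed

lemma enet_coord_penalty_ge_lasso:
  assumes "Kii > 0" "\<xi> \<ge> 0" "0 \<le> w" "w \<le> pu"
  shows "Kii * \<xi> * (1 - pu) * \<bar>b\<bar> \<le> enet_coord_penalty Kii \<xi> \<sigma>1 w b"
proof -
  have "Kii * \<xi> * (1 - pu) * \<bar>b\<bar> \<le> \<xi> * (1 - w) * \<bar>Kii\<bar> * \<bar>b\<bar>"
    using assms by (simp add: mult_left_mono mult_right_mono mult.commute mult.left_commute)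
  also have "\<dots> \<le> enet_coord_penalty Kii \<xi> \<sigma>1 w b"
    using assms unfolding enet_coord_penalty_def by simp
  finally show ?thesis .
qed

lemma enet_penalty_diff_le:
  fixes bs bh pw :: "nat \<Rightarrow> real"
  assumes J: "finite J" "S \<subseteq> J" and off: "\<forall>j\<in>J - S. bs j = 0" and bnd: "\<forall>j\<in>S. \<bar>bs j\<bar> \<le> B"
    and pw: "\<forall>j\<in>J. 0 \<le> pw j \<and> pw j \<le> 1" "\<forall>j\<in>J - S. pw j \<le> pu"
    and pos: "Kii > 0" "\<sigma>1 > 0" "\<xi> \<ge> 0" "\<xi> \<ge> B * Kii / \<sigma>1\<^sup>2"
  shows "enet_penalty J Kii \<xi> \<sigma>1 pw bs - enet_penalty J Kii \<xi> \<sigma>1 pw bh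
    \<le> Kii * (\<xi> * (\<Sum>j\<in>S. \<bar>bh j - bs j\<bar>) - \<xi> * (1 - pu) * (\<Sum>j\<in>J - S. \<bar>bh j - bs j\<bar>))"
proof -
  let ?pen = "\<lambda>\<beta> j. enet_coord_penalty Kii \<xi> \<sigma>1 (pw j) (\<beta> j)"
  have split: "enet_penalty J Kii \<xi> \<sigma>1 pw \<beta> = sum (?pen \<beta>) S + sum (?pen \<beta>) (J - S)" for \<beta>
    unfolding enet_penalty_def using sum.subset_diff[OF J(2,1)] by (simp add: add.commute)
  have "sum (?pen bs) S - sum (?pen bh) S \<le> (\<Sum>j\<in>S. Kii * \<xi> * \<bar>bh j - bs j\<bar>)"
    unfolding sum_subtractf[symmetric] using J bnd pw pos
    by (intro sum_mono enet_coord_penalty_diff_le) auto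
  moreover have "(\<Sum>j\<in>J - S. Kii * \<xi> * (1 - pu) * \<bar>bh j - bs j\<bar>) \<le> sum (?pen bh) (J - S)"
    using pw pos off by (intro sum_mono) (auto intro!: enet_coord_penalty_ge_lasso)
  moreover have "sum (?pen bs) (J - S) = 0"
    using off by (simp add: enet_coord_penalty_def)
  ultimately show ?thesis
    unfolding split sum_distrib_left[symmetric] by (simp add: algebra_simps)
qed

lemma enet_basic_inequality:
  fixes p i :: nat and x :: "nat \<Rightarrow> nat \<Rightarrow> real" and bh bs pw :: "nat \<Rightarrow> real"
  defines "J \<equiv> other_idx p i"
  assumes opt: "enet_obj n p i Kii \<xi> \<sigma>1 pw x bh \<le> enet_obj n p i Kii \<xi> \<sigma>1 pw x bs"
    and pen: "enet_penalty J Kii \<xi> \<sigma>1 pw bs - enet_penalty J Kii \<xi> \<sigma>1 pw bh \<le> Kii * D"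
    and Kii: "Kii > 0"
  shows "(\<Sum>r<n. (\<Sum>j\<in>J. x r j * (bh j - bs j))\<^sup>2) / 2
    \<le> (\<Sum>r<n. (x r i - (\<Sum>j\<in>J. x r j * bs j)) * (\<Sum>j\<in>J. x r j * (bh j - bs j))) + D"
proof -
  define e where "e r = x r i - (\<Sum>j\<in>J. x r j * bs j)" for r
  define z where "z r = (\<Sum>j\<in>J. x r j * (bh j - bs j))" for r
  have "x r i - (\<Sum>j\<in>J. x r j * bh j) = e r - z r" for r
    unfolding e_def z_def by (simp add: sum_subtractf algebra_simps)
  then have "Kii / 2 * (\<Sum>r<n. (e r - z r)\<^sup>2) + enet_penalty J Kii \<xi> \<sigma>1 pw bh
      \<le> Kii / 2 * (\<Sum>r<n. (e r)\<^sup>2) + enet_penalty J Kii \<xi> \<sigma>1 pw bs"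
    using opt unfolding enet_obj_eq J_def[symmetric] e_def[symmetric] by simp
  moreover have "(\<Sum>r<n. (e r - z r)\<^sup>2) = (\<Sum>r<n. (e r)\<^sup>2) - 2 * (\<Sum>r<n. e r * z r) + (\<Sum>r<n. (z r)\<^sup>2)"
    by (simp add: power2_diff sum.distrib sum_subtractf sum_distrib_left algebra_simps)
  ultimately have "Kii * ((\<Sum>r<n. (z r)\<^sup>2) / 2) \<le> Kii * ((\<Sum>r<n. e r * z r) + D)"
    using pen by (simp add: algebra_simps)
  then show ?thesis
    using Kii unfolding e_def z_def by simp
qed

section \<open>From the basic inequality to the l1 error bound\<close>

definition cone_constant :: "real \<Rightarrow> real \<Rightarrow> real" where
  "cone_constant pl pu = (5 - 2 * pl) / (1 - 2 * pu)"

text \<open>The absolute value only matters when \<open>pu \<ge> 1 / 2\<close>; it keeps the factor positive for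
  all arguments, as the theorem requires.\<close>
definition enet_error_factor :: "real \<Rightarrow> real \<Rightarrow> real \<Rightarrow> real" where
  "enet_error_factor \<phi> pl pu = (1 + \<bar>cone_constant pl pu\<bar>) * (3 + 8 / \<phi>\<^sup>2) + 4"

lemma enet_error_factor_pos: "enet_error_factor \<phi> pl pu > 0"
  unfolding enet_error_factor_def by (intro add_nonneg_pos mult_nonneg_nonneg) auto

lemma le_divide_if_mult_sq_le:
  fixes a b d :: real
  assumes "a * d\<^sup>2 \<le> b * d" "a > 0" "b \<ge> 0" "d \<ge> 0"
  shows "d \<le> b / a"
proof (cases "d = 0")
  case False
  then have "a * d \<le> b"
    using assms by (simp add: power2_eq_square mult.assoc[symmetric])
  then show ?thesis
    using assms by (simp add: field_simps)
qed (use assms in simp)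

lemma l1_le_enet_error_factor_if_cone:
  fixes DS Dc k s \<xi> n :: real
  assumes cone: "Dc \<le> cone_constant pl pu * DS" and DS: "0 \<le> DS" "DS \<le> k * (s * \<xi> / n)"
    and k: "k \<le> 3 + 8 / \<phi>\<^sup>2" and nonneg: "0 \<le> s * \<xi> / n"
  shows "DS + Dc \<le> enet_error_factor \<phi> pl pu * s * \<xi> / n"
proof -
  let ?L = "cone_constant pl pu"
  have "DS + Dc \<le> (1 + \<bar>?L\<bar>) * DS"
    using cone DS abs_ge_self[of ?L] mult_right_mono[of ?L "\<bar>?L\<bar>" DS] by (simp add: algebra_simps)
  also have "\<dots> \<le> (1 + \<bar>?L\<bar>) * ((3 + 8 / \<phi>\<^sup>2) * (s * \<xi> / n))"
    using DS k nonneg by (intro mult_left_mono order.trans[OF DS(2)] mult_right_mono) auto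
  also have "\<dots> \<le> enet_error_factor \<phi> pl pu * (s * \<xi> / n)"
  proof -
    have "c * (d * x) \<le> (c * d + 4) * x" if "0 \<le> x" for c d x :: real
      using that by (simp add: algebra_simps)
    then show ?thesis
      using nonneg unfolding enet_error_factor_def by blast
  qed
  finally show ?thesis
    by simp
qed

lemma l1_error_bound_if_cross_term_small:
  fixes Q W DS Dc \<xi> pl pu \<phi> n s :: real
  assumes basic: "Q / 2 \<le> W + \<xi> * DS - \<xi> * (1 - pu) * Dc" and cross: "W \<le> \<xi> / 2 * (DS + Dc)"
    and compat: "Dc \<le> cone_constant pl pu * DS \<Longrightarrow> n * \<phi>\<^sup>2 / s * DS\<^sup>2 \<le> Q"
    and nonneg: "0 \<le> Q" "0 \<le> DS" "0 \<le> Dc" and p: "pu < 1 / 2" "pl \<le> 1"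
    and pos: "n > 0" "s > 0" "\<phi> > 0" "\<xi> > 0"
  shows "DS + Dc \<le> enet_error_factor \<phi> pl pu * s * \<xi> / n"
proof -
  have "\<xi> * (1 - pu) * Dc = \<xi> * Dc / 2 + \<xi> * ((1 - 2 * pu) * Dc) / 2"
    and "\<xi> / 2 * (DS + Dc) = \<xi> * DS / 2 + \<xi> * Dc / 2"
    by (simp_all add: field_simps)
  then have key: "Q / 2 + \<xi> * ((1 - 2 * pu) * Dc) / 2 \<le> 3 / 2 * (\<xi> * DS)"
    using basic cross by linarith
  moreover have "0 \<le> \<xi> * ((1 - 2 * pu) * Dc)"
    using nonneg p pos by simp
  ultimately have Q: "Q \<le> 3 * \<xi> * DS" and "\<xi> * ((1 - 2 * pu) * Dc) \<le> \<xi> * (3 * DS)"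
    using nonneg by linarith+
  then have "(1 - 2 * pu) * Dc \<le> 3 * DS"
    using pos by simp
  also have "\<dots> \<le> (5 - 2 * pl) * DS"
    using nonneg p by (intro mult_right_mono) auto
  finally have cone: "Dc \<le> cone_constant pl pu * DS"
    using p unfolding cone_constant_def by (simp add: field_simps)
  have "n * \<phi>\<^sup>2 / s * DS\<^sup>2 \<le> (3 * \<xi>) * DS"
    using compat[OF cone] Q by simp
  then have "DS \<le> 3 * \<xi> / (n * \<phi>\<^sup>2 / s)"
    using pos nonneg by (intro le_divide_if_mult_sq_le) auto
  also have "\<dots> = 3 / \<phi>\<^sup>2 * (s * \<xi> / n)"
    using pos by (simp add: field_simps)
  finally have "DS \<le> 3 / \<phi>\<^sup>2 * (s * \<xi> / n)" .
  moreover have "3 / \<phi>\<^sup>2 \<le> 3 + 8 / \<phi>\<^sup>2"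
    using divide_right_mono[of 3 8 "\<phi>\<^sup>2"] by simp
  ultimately show ?thesis
    using pos by (intro l1_le_enet_error_factor_if_cone[OF cone nonneg(2)]) auto
qed

lemma l1_error_bound_if_noise_small_in_cone:
  fixes Q DS Dc e \<xi> pl pu \<phi> n s :: real
  assumes key: "Q / 4 \<le> e + \<xi> * DS - \<xi> * (1 - pu) * Dc" and noise: "e \<le> \<xi>\<^sup>2 / n"
    and cone: "Dc \<le> cone_constant pl pu * DS" and compat: "n * \<phi>\<^sup>2 / s * DS\<^sup>2 \<le> Q"
    and nonneg: "0 \<le> DS" "0 \<le> Dc" and p: "pu \<le> 1"
    and pos: "n > 0" "s \<ge> 1" "\<phi> > 0" "\<xi> > 0"
  shows "DS + Dc \<le> enet_error_factor \<phi> pl pu * s * \<xi> / n"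
proof -
  have "\<xi> / n \<le> s * \<xi> / n"
    using pos by (simp add: divide_right_mono)
  have "DS \<le> max 1 (8 / \<phi>\<^sup>2) * (s * \<xi> / n)"
  proof (cases "DS \<le> s * \<xi> / n")
    case True
    moreover have "1 * (s * \<xi> / n) \<le> max 1 (8 / \<phi>\<^sup>2) * (s * \<xi> / n)"
      using pos by (intro mult_right_mono) auto
    ultimately show ?thesis
      by simp
  next
    case False
    have "e \<le> \<xi> * (\<xi> / n)"
      using noise by (simp add: power2_eq_square)
    also have "\<dots> \<le> \<xi> * DS"
      using False \<open>\<xi> / n \<le> s * \<xi> / n\<close> pos by (intro mult_left_mono) auto
    moreover have "0 \<le> \<xi> * (1 - pu) * Dc"
      using nonneg p pos by simp
    ultimately have "n * \<phi>\<^sup>2 / s * DS\<^sup>2 \<le> (8 * \<xi>) * DS"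
      using key compat by simp
    then have "DS \<le> 8 * \<xi> / (n * \<phi>\<^sup>2 / s)"
      using pos nonneg by (intro le_divide_if_mult_sq_le) auto
    also have "\<dots> = 8 / \<phi>\<^sup>2 * (s * \<xi> / n)"
      using pos by (simp add: field_simps)
    also have "\<dots> \<le> max 1 (8 / \<phi>\<^sup>2) * (s * \<xi> / n)"
      using pos by (intro mult_right_mono) auto
    finally show ?thesis .
  qed
  moreover have "max 1 (8 / \<phi>\<^sup>2) \<le> 3 + 8 / \<phi>\<^sup>2"
    by simp
  ultimately show ?thesis
    using pos by (intro l1_le_enet_error_factor_if_cone[OF cone nonneg(1)]) auto
qed

lemma l1_error_bound_if_noise_small_off_cone:
  fixes Q DS Dc e \<xi> pl pu \<phi> n s :: real
  assumes key: "Q / 4 \<le> e + \<xi> * DS - \<xi> * (1 - pu) * Dc" and noise: "e \<le> \<xi>\<^sup>2 / n"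
    and off_cone: "\<not> Dc \<le> cone_constant pl pu * DS"
    and nonneg: "0 \<le> Q" "0 \<le> DS" "0 \<le> Dc" and p: "0 \<le> pu" "pu < 1 / 2" "pl \<le> 1"
    and pos: "n > 0" "s \<ge> 1" "\<xi> > 0"
  shows "DS + Dc \<le> enet_error_factor \<phi> pl pu * s * \<xi> / n"
proof -
  have "(5 - 2 * pl) * DS < (1 - 2 * pu) * Dc"
    using off_cone p unfolding cone_constant_def by (simp add: field_simps)
  moreover have "3 * DS \<le> (5 - 2 * pl) * DS"
    using nonneg p by (intro mult_right_mono) auto
  ultimately have DS: "3 * DS \<le> (1 - 2 * pu) * Dc"
    by linarith
  have "\<xi> * (1 - pu) * Dc - \<xi> * ((1 - 2 * pu) * Dc) / 3 = \<xi> * Dc / 2 + \<xi> * Dc * (1 - 2 * pu) / 6"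
    by (simp add: field_simps)
  moreover have "0 \<le> \<xi> * Dc * (1 - 2 * pu) / 6"
    using p pos nonneg by simp
  ultimately have "\<xi> * Dc / 2 \<le> \<xi> * (1 - pu) * Dc - \<xi> * ((1 - 2 * pu) * Dc) / 3"
    by linarith
  also have "\<dots> \<le> \<xi> * (1 - pu) * Dc - \<xi> * DS"
    using DS pos by simp
  also have "\<dots> \<le> \<xi>\<^sup>2 / n"
    using key noise nonneg by linarith
  finally have "Dc \<le> 2 * (\<xi> / n)"
    using pos by (simp add: power2_eq_square field_simps)
  moreover have "DS \<le> Dc"
    using DS p nonneg mult_left_le_one_le[of Dc "1 - 2 * pu"] by linarith
  moreover have "\<xi> / n \<le> s * \<xi> / n"
    using pos by (simp add: divide_right_mono)
  ultimately have "DS + Dc \<le> 4 * (s * \<xi> / n)"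
    by linarith
  also have "\<dots> \<le> enet_error_factor \<phi> pl pu * (s * \<xi> / n)"
    using pos unfolding enet_error_factor_def by (intro mult_right_mono) auto
  finally show ?thesis
    by simp
qed

lemma l1_error_bound_if_noise_small:
  fixes Q W DS Dc e \<xi> pl pu \<phi> n s :: real
  assumes basic: "Q / 2 \<le> W + \<xi> * DS - \<xi> * (1 - pu) * Dc" and cross: "W \<le> Q / 4 + e"
    and noise: "e \<le> \<xi>\<^sup>2 / n"
    and compat: "Dc \<le> cone_constant pl pu * DS \<Longrightarrow> n * \<phi>\<^sup>2 / s * DS\<^sup>2 \<le> Q"
    and nonneg: "0 \<le> Q" "0 \<le> DS" "0 \<le> Dc" and p: "0 \<le> pu" "pu < 1 / 2" "pl \<le> 1"
    and pos: "n > 0" "s \<ge> 1" "\<phi> > 0" "\<xi> > 0"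
  shows "DS + Dc \<le> enet_error_factor \<phi> pl pu * s * \<xi> / n"
proof -
  have key: "Q / 4 \<le> e + \<xi> * DS - \<xi> * (1 - pu) * Dc"
    using basic cross by linarith
  show ?thesis
  proof (cases "Dc \<le> cone_constant pl pu * DS")
    case True
    then show ?thesis
      using p pos nonneg
      by (intro l1_error_bound_if_noise_small_in_cone[OF key noise True compat[OF True]]) auto
  next
    case False
    then show ?thesis
      by (rule l1_error_bound_if_noise_small_off_cone[OF key noise _ nonneg p pos(1,2,4)])
  qed
qed

lemma sum_mult_le_sup_norm_times_l1:
  fixes x :: "nat \<Rightarrow> nat \<Rightarrow> real" and e d :: "nat \<Rightarrow> real"
  assumes "\<forall>j\<in>J. \<bar>\<Sum>r<n. x r j * e r\<bar> \<le> h"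
  shows "(\<Sum>r<n. e r * (\<Sum>j\<in>J. x r j * d j)) \<le> h * (\<Sum>j\<in>J. \<bar>d j\<bar>)"
proof -
  have "(\<Sum>r<n. e r * (\<Sum>j\<in>J. x r j * d j)) = (\<Sum>j\<in>J. d j * (\<Sum>r<n. x r j * e r))"
    by (simp add: sum_distrib_left sum.swap[of _ "{..<n}"] algebra_simps)
  also have "\<dots> \<le> (\<Sum>j\<in>J. \<bar>d j\<bar> * h)"
  proof (rule sum_mono)
    fix j assume "j \<in> J"
    have "d j * (\<Sum>r<n. x r j * e r) \<le> \<bar>d j\<bar> * \<bar>\<Sum>r<n. x r j * e r\<bar>"
      by (metis abs_ge_self abs_mult)
    also have "\<dots> \<le> \<bar>d j\<bar> * h"
      using assms \<open>j \<in> J\<close> by (intro mult_left_mono) auto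
    finally show "d j * (\<Sum>r<n. x r j * e r) \<le> \<bar>d j\<bar> * h" .
  qed
  also have "\<dots> = h * (\<Sum>j\<in>J. \<bar>d j\<bar>)"
    by (simp add: sum_distrib_left mult.commute)
  finally show ?thesis .
qed

lemma sum_mult_le_sum_sq_div4_add_sum_sq:
  fixes e z :: "nat \<Rightarrow> real"
  shows "(\<Sum>r<n. e r * z r) \<le> (\<Sum>r<n. (z r)\<^sup>2) / 4 + (\<Sum>r<n. (e r)\<^sup>2)"
proof -
  have "e r * z r \<le> (z r)\<^sup>2 / 4 + (e r)\<^sup>2" for r
    using zero_le_power2[of "z r / 2 - e r"] by (simp add: power2_eq_square algebra_simps)
  then have "(\<Sum>r<n. e r * z r) \<le> (\<Sum>r<n. (z r)\<^sup>2 / 4 + (e r)\<^sup>2)"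
    by (intro sum_mono)
  then show ?thesis
    by (simp add: sum.distrib sum_divide_distrib)
qed

lemma enet_l1_error_bound:
  fixes p i n :: nat and x :: "nat \<Rightarrow> nat \<Rightarrow> real" and bh bs pw :: "nat \<Rightarrow> real"
  defines "J \<equiv> other_idx p i" and "S \<equiv> supp_set p i bs"
    and "pu \<equiv> pbar p i bs pw" and "pl \<equiv> plow p i bs pw"
    and "e \<equiv> \<lambda>r. x r i - (\<Sum>k\<in>other_idx p i. x r k * bs k)"
  assumes est: "is_enet_estimator n p i Kii \<xi> \<sigma>1 pw x bh"
    and pos: "Kii > 0" "\<sigma>1 > 0" "\<xi> > 0" "\<xi> \<ge> B * Kii / \<sigma>1\<^sup>2" "n \<ge> 1" "\<phi> > 0"
    and bs: "S \<noteq> {}" "\<forall>j\<in>S. \<bar>bs j\<bar> \<le> B"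
    and pw: "\<forall>j\<in>J. 0 \<le> pw j \<and> pw j \<le> 1" "pu < 1 / 2"
    and compat: "\<forall>\<delta>. (\<Sum>j\<in>J - S. \<bar>\<delta> j\<bar>) \<le> cone_constant pl pu * (\<Sum>j\<in>S. \<bar>\<delta> j\<bar>) \<longrightarrow>
        real n * \<phi>\<^sup>2 / real (card S) * (\<Sum>j\<in>S. \<bar>\<delta> j\<bar>)\<^sup>2 \<le> (\<Sum>r<n. (\<Sum>j\<in>J. x r j * \<delta> j)\<^sup>2)"
    and noise: "(\<forall>j\<in>J. \<bar>\<Sum>r<n. x r j * e r\<bar> \<le> \<xi> / 2) \<or> (\<Sum>r<n. (e r)\<^sup>2) \<le> \<xi>\<^sup>2 / n"
  shows "(\<Sum>j\<in>J. \<bar>bh j - bs j\<bar>) \<le> enet_error_factor \<phi> pl pu * real (card S) * \<xi> / real n"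
proof -
  define Q where "Q = (\<Sum>r<n. (\<Sum>j\<in>J. x r j * (bh j - bs j))\<^sup>2)"
  define W where "W = (\<Sum>r<n. e r * (\<Sum>j\<in>J. x r j * (bh j - bs j)))"
  define DS where "DS = (\<Sum>j\<in>S. \<bar>bh j - bs j\<bar>)"
  define Dc where "Dc = (\<Sum>j\<in>J - S. \<bar>bh j - bs j\<bar>)"
  have SJ: "S \<subseteq> J"
    unfolding S_def J_def by (rule supp_set_subset)
  then have finS: "finite S"
    using finite_subset[OF SJ] by (simp add: J_def)
  have "enet_penalty J Kii \<xi> \<sigma>1 pw bs - enet_penalty J Kii \<xi> \<sigma>1 pw bh
      \<le> Kii * (\<xi> * DS - \<xi> * (1 - pu) * Dc)"
    unfolding DS_def Dc_def using SJ bs(2) pw pos pw_le_pbar pbar_nonneg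
    by (intro enet_penalty_diff_le) (auto simp: J_def S_def pu_def supp_set_def)
  then have basic: "Q / 2 \<le> W + \<xi> * DS - \<xi> * (1 - pu) * Dc"
    using enet_basic_inequality[of n p i Kii \<xi> \<sigma>1 pw x bh bs] est pos(1)
    unfolding is_enet_estimator_def Q_def W_def e_def J_def by fastforce
  have cmp: "Dc \<le> cone_constant pl pu * DS \<Longrightarrow> n * \<phi>\<^sup>2 / card S * DS\<^sup>2 \<le> Q"
    using compat[rule_format, of "\<lambda>j. bh j - bs j"] unfolding Q_def DS_def Dc_def by simp
  have nonneg: "0 \<le> Q" "0 \<le> DS" "0 \<le> Dc"
    unfolding Q_def DS_def Dc_def by (auto intro: sum_nonneg)
  have p: "0 \<le> pu" "pl \<le> 1"
    using pw bs(1) pbar_nonneg plow_le_one unfolding pu_def pl_def J_def S_def by auto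
  have card: "real (card S) \<ge> 1"
    using bs(1) finS by (simp add: Suc_le_eq card_gt_0_iff)
  have split: "(\<Sum>j\<in>J. \<bar>bh j - bs j\<bar>) = DS + Dc"
    unfolding DS_def Dc_def using sum.subset_diff[OF SJ] by (simp add: J_def add.commute)
  moreover have "DS + Dc \<le> enet_error_factor \<phi> pl pu * real (card S) * \<xi> / real n"
    using noise
  proof
    assume "\<forall>j\<in>J. \<bar>\<Sum>r<n. x r j * e r\<bar> \<le> \<xi> / 2"
    then have "W \<le> \<xi> / 2 * (\<Sum>j\<in>J. \<bar>bh j - bs j\<bar>)"
      unfolding W_def by (rule sum_mult_le_sup_norm_times_l1)
    then have "W \<le> \<xi> / 2 * (DS + Dc)"
      unfolding split .
    then show ?thesis
      using l1_error_bound_if_cross_term_small[OF basic _ cmp nonneg pw(2) p(2)] pos card by simp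
  next
    assume "(\<Sum>r<n. (e r)\<^sup>2) \<le> \<xi>\<^sup>2 / n"
    moreover have "W \<le> Q / 4 + (\<Sum>r<n. (e r)\<^sup>2)"
      unfolding W_def Q_def by (rule sum_mult_le_sum_sq_div4_add_sum_sq)
    ultimately show ?thesis
      using l1_error_bound_if_noise_small[OF basic _ _ cmp nonneg p(1) pw(2) p(2)] pos card by simp
  qed
  ultimately show ?thesis
    by simp
qed

section \<open>Gaussian moment generating functions and Chernoff bounds\<close>

lemma nn_integral_normal_density: "\<sigma> > 0 \<Longrightarrow> (\<integral>\<^sup>+x. ennreal (normal_density \<mu> \<sigma> x) \<partial>lborel) = 1"
  by (subst nn_integral_eq_integral) (auto intro: integrable_normal_density)

lemma inverse_sqrt_one_minus_le_exp:
  fixes q :: real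
  assumes "0 \<le> q" "q \<le> 1 / 2"
  shows "1 / sqrt (1 - q) \<le> exp q"
proof -
  have "q * q \<le> q / 2"
    using assms mult_left_mono[of q "1 / 2" q] by simp
  then have "0 \<le> q * (1 - q - q\<^sup>2)"
    using assms by (intro mult_nonneg_nonneg) (auto simp: power2_eq_square)
  moreover have "(1 + q)\<^sup>2 * (1 - q) = 1 + q * (1 - q - q\<^sup>2)"
    by (simp add: power2_eq_square algebra_simps)
  ultimately have "1 \<le> (1 + q)\<^sup>2 * (1 - q)"
    by simp
  then have "1 \<le> (1 + q) * sqrt (1 - q)"
    using assms real_sqrt_le_mono[of 1 "(1 + q)\<^sup>2 * (1 - q)"] by (simp add: real_sqrt_mult)
  then have "1 / sqrt (1 - q) \<le> 1 + q"
    using assms by (simp add: field_simps)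
  also have "\<dots> \<le> exp q"
    by (rule exp_ge_add_one_self)
  finally show ?thesis .
qed

text \<open>The density times \<open>exp (\<mu> x\<^sup>2)\<close> is a rescaled centred normal density of variance
  \<open>\<sigma>\<^sup>2 / (1 - 2 \<mu> \<sigma>\<^sup>2)\<close>.\<close>

lemma nn_integral_normal_density_exp_sq_le:
  fixes \<sigma> \<mu> :: real
  assumes "\<sigma> > 0" "0 \<le> \<mu>" "2 * \<mu> * \<sigma>\<^sup>2 \<le> 1 / 2"
  shows "(\<integral>\<^sup>+x. ennreal (normal_density 0 \<sigma> x) * ennreal (exp (\<mu> * x\<^sup>2)) \<partial>lborel)
    \<le> ennreal (exp (2 * \<mu> * \<sigma>\<^sup>2))"
proof -
  define q where "q = 2 * \<mu> * \<sigma>\<^sup>2"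
  have q: "0 \<le> q" "q \<le> 1 / 2"
    using assms unfolding q_def by auto
  define \<sigma>' where "\<sigma>' = \<sigma> / sqrt (1 - q)"
  have sq: "sqrt (1 - q) > 0"
    using q by simp
  have \<sigma>'2: "\<sigma>'\<^sup>2 = \<sigma>\<^sup>2 / (1 - q)"
    unfolding \<sigma>'_def using q by (simp add: power_divide)
  have "normal_density 0 \<sigma> x * exp (\<mu> * x\<^sup>2) = 1 / sqrt (1 - q) * normal_density 0 \<sigma>' x" for x
  proof -
    have "- x\<^sup>2 / (2 * \<sigma>\<^sup>2) + \<mu> * x\<^sup>2 = - x\<^sup>2 / (2 * \<sigma>'\<^sup>2)"
      unfolding \<sigma>'2 q_def using assms q by (simp add: field_simps)
    moreover have "1 / sqrt (2 * pi * \<sigma>'\<^sup>2) = sqrt (1 - q) / sqrt (2 * pi * \<sigma>\<^sup>2)"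
      unfolding \<sigma>'2 using q assms by (simp add: real_sqrt_divide real_sqrt_mult field_simps)
    ultimately show ?thesis
      unfolding normal_density_def using sq by (simp add: exp_add[symmetric] field_simps)
  qed
  then have "(\<integral>\<^sup>+x. ennreal (normal_density 0 \<sigma> x) * ennreal (exp (\<mu> * x\<^sup>2)) \<partial>lborel)
      = (\<integral>\<^sup>+x. ennreal (1 / sqrt (1 - q)) * ennreal (normal_density 0 \<sigma>' x) \<partial>lborel)"
    using sq by (intro nn_integral_cong) (simp add: ennreal_mult[symmetric])
  also have "\<dots> = ennreal (1 / sqrt (1 - q))"
    using assms sq by (simp add: nn_integral_cmult nn_integral_normal_density \<sigma>'_def)
  also have "\<dots> \<le> ennreal (exp q)"
    using inverse_sqrt_one_minus_le_exp[OF q] by simp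
  finally show ?thesis
    unfolding q_def .
qed

lemma (in prob_space) nn_integral_exp_sum_sq_normal_le:
  fixes eps :: "nat \<Rightarrow> 'a \<Rightarrow> real"
  assumes dist: "\<forall>r<n. distributed M lborel (eps r) (\<lambda>x. ennreal (normal_density 0 \<sigma> x))"
    and ind: "indep_vars (\<lambda>_. borel) eps {..<n}"
    and \<sigma>: "\<sigma> > 0" and \<mu>: "0 \<le> \<mu>" "2 * \<mu> * \<sigma>\<^sup>2 \<le> 1 / 2"
  shows "(\<integral>\<^sup>+\<omega>. ennreal (exp (\<mu> * (\<Sum>r<n. (eps r \<omega>)\<^sup>2))) \<partial>M) \<le> ennreal (exp (real n * (2 * \<mu> * \<sigma>\<^sup>2)))"
proof -
  have "(\<integral>\<^sup>+\<omega>. ennreal (exp (\<mu> * (\<Sum>r<n. (eps r \<omega>)\<^sup>2))) \<partial>M)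
      = (\<integral>\<^sup>+\<omega>. (\<Prod>r<n. ennreal (exp (\<mu> * (eps r \<omega>)\<^sup>2))) \<partial>M)"
    by (intro nn_integral_cong) (simp add: sum_distrib_left exp_sum prod_ennreal)
  also have "\<dots> = (\<Prod>r<n. \<integral>\<^sup>+\<omega>. ennreal (exp (\<mu> * (eps r \<omega>)\<^sup>2)) \<partial>M)"
    using indep_vars_compose2[OF ind, of "\<lambda>r x. ennreal (exp (\<mu> * x\<^sup>2))" "\<lambda>_. borel"]
    by (intro indep_vars_nn_integral) auto
  also have "\<dots> \<le> (\<Prod>r<n. ennreal (exp (2 * \<mu> * \<sigma>\<^sup>2)))"
  proof (intro prod_mono_ennreal)
    fix r assume "r \<in> {..<n}"
    then have "(\<integral>\<^sup>+\<omega>. ennreal (exp (\<mu> * (eps r \<omega>)\<^sup>2)) \<partial>M)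
        = (\<integral>\<^sup>+x. ennreal (normal_density 0 \<sigma> x) * ennreal (exp (\<mu> * x\<^sup>2)) \<partial>lborel)"
      using dist distributed_nn_integral[of M lborel "eps r" _ "\<lambda>x. ennreal (exp (\<mu> * x\<^sup>2))"] by simp
    also have "\<dots> \<le> ennreal (exp (2 * \<mu> * \<sigma>\<^sup>2))"
      by (rule nn_integral_normal_density_exp_sq_le[OF \<sigma> \<mu>])
    finally show "(\<integral>\<^sup>+\<omega>. ennreal (exp (\<mu> * (eps r \<omega>)\<^sup>2)) \<partial>M) \<le> ennreal (exp (2 * \<mu> * \<sigma>\<^sup>2))" .
  qed
  also have "\<dots> = ennreal (exp (real n * (2 * \<mu> * \<sigma>\<^sup>2)))"
    by (simp add: exp_of_nat_mult ennreal_power)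
  finally show ?thesis .
qed

lemma (in prob_space) nn_integral_exp_row_combination_le:
  fixes X :: "'a \<Rightarrow> nat \<Rightarrow> nat \<Rightarrow> real" and e :: "nat \<Rightarrow> real"
  assumes rows: "indep_vars (\<lambda>_. PiM J (\<lambda>_. borel)) (\<lambda>r \<omega>. \<lambda>j\<in>J. X \<omega> r j) {..<n}" and j: "j \<in> J"
    and subg: "\<And>r \<tau>. r < n \<Longrightarrow> (\<integral>\<^sup>+\<omega>. ennreal (exp (\<tau> * X \<omega> r j)) \<partial>M) \<le> ennreal (exp (\<tau>\<^sup>2 * \<sigma>X\<^sup>2 / 2))"
  shows "(\<integral>\<^sup>+\<omega>. ennreal (exp (t * (\<Sum>r<n. X \<omega> r j * e r))) \<partial>M)
    \<le> ennreal (exp (t\<^sup>2 * \<sigma>X\<^sup>2 / 2 * (\<Sum>r<n. (e r)\<^sup>2)))"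
proof -
  have "(\<integral>\<^sup>+\<omega>. ennreal (exp (t * (\<Sum>r<n. X \<omega> r j * e r))) \<partial>M)
      = (\<integral>\<^sup>+\<omega>. (\<Prod>r<n. ennreal (exp ((t * e r) * X \<omega> r j))) \<partial>M)"
    by (intro nn_integral_cong) (simp add: sum_distrib_left exp_sum prod_ennreal mult_ac)
  also have "\<dots> = (\<Prod>r<n. \<integral>\<^sup>+\<omega>. ennreal (exp ((t * e r) * X \<omega> r j)) \<partial>M)"
    using indep_vars_compose2[OF rows, of "\<lambda>r x. ennreal (exp ((t * e r) * x j))" "\<lambda>_. borel"] j
    by (intro indep_vars_nn_integral) auto
  also have "\<dots> \<le> (\<Prod>r<n. ennreal (exp ((t * e r)\<^sup>2 * \<sigma>X\<^sup>2 / 2)))"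
    using subg by (intro prod_mono_ennreal) auto
  also have "\<dots> = ennreal (exp (t\<^sup>2 * \<sigma>X\<^sup>2 / 2 * (\<Sum>r<n. (e r)\<^sup>2)))"
    by (simp add: prod_ennreal exp_sum[symmetric] sum_distrib_left power_mult_distrib mult_ac)
  finally show ?thesis .
qed

lemma (in prob_space) prob_ge_le_exp_of_mgf:
  assumes Y: "Y \<in> borel_measurable M" and t: "t > 0"
    and mgf: "(\<integral>\<^sup>+\<omega>. ennreal (exp (t * Y \<omega>)) \<partial>M) \<le> ennreal (exp k)"
  shows "prob {\<omega>\<in>space M. a \<le> Y \<omega>} \<le> exp (k - t * a)"
proof -
  have "(\<lambda>\<omega>. Y \<omega> * indicator (space M) \<omega>) \<in> borel_measurable M"
    using Y by measurable
  then have "ennreal (prob {\<omega>\<in>space M. a \<le> Y \<omega>})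
      \<le> ennreal (exp (- t * a)) * (\<integral>\<^sup>+\<omega>. ennreal (exp (t * Y \<omega>)) \<partial>M)"
    using Chernoff_ineq_nn_integral_ge[OF t sets.top[of M], of Y a] by (simp add: emeasure_eq_measure)
  also have "\<dots> \<le> ennreal (exp (- t * a)) * ennreal (exp k)"
    using mgf by (rule mult_left_mono) simp
  also have "\<dots> = ennreal (exp (k - t * a))"
    by (simp add: ennreal_mult[symmetric] exp_add[symmetric])
  finally show ?thesis
    by simp
qed

lemma (in prob_space) prob_sum_sq_normal_ge_le:
  fixes eps :: "nat \<Rightarrow> 'a \<Rightarrow> real"
  assumes dist: "\<forall>r<n. distributed M lborel (eps r) (\<lambda>x. ennreal (normal_density 0 \<sigma> x))"
    and ind: "indep_vars (\<lambda>_. borel) eps {..<n}" and \<sigma>: "\<sigma> > 0"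
  shows "prob {\<omega>\<in>space M. a \<le> (\<Sum>r<n. (eps r \<omega>)\<^sup>2)} \<le> exp (real n / 2 - a / (4 * \<sigma>\<^sup>2))"
proof -
  have "eps r \<in> borel_measurable M" if "r < n" for r
    using distributed_measurable[OF dist[rule_format, OF that]] by simp
  then have meas: "(\<lambda>\<omega>. \<Sum>r<n. (eps r \<omega>)\<^sup>2) \<in> borel_measurable M"
    by (intro borel_measurable_sum borel_measurable_power) auto
  have "(\<integral>\<^sup>+\<omega>. ennreal (exp (1 / (4 * \<sigma>\<^sup>2) * (\<Sum>r<n. (eps r \<omega>)\<^sup>2))) \<partial>M) \<le> ennreal (exp (real n / 2))"
    using nn_integral_exp_sum_sq_normal_le[OF dist ind \<sigma>, of "1 / (4 * \<sigma>\<^sup>2)"] \<sigma> by simp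
  from prob_ge_le_exp_of_mgf[OF meas _ this, of a] \<sigma>
  show ?thesis
    by simp
qed

text \<open>Chernoff's optimal exponent \<open>a / (2 n b)\<close> when it is admissible, otherwise the largest
  admissible one.\<close>

lemma exists_Chernoff_exponent:
  fixes a n b L :: real
  assumes "a > 0" "n > 0" "b > 0" "L \<ge> 0" "8 * b * n * L \<le> a\<^sup>2" "4 * L \<le> n"
  shows "\<exists>\<tau>>0. \<tau>\<^sup>2 * b \<le> 1 / 2 \<and> n * (\<tau>\<^sup>2 * b) - \<tau> * a \<le> - 2 * L"
proof (cases "a\<^sup>2 \<le> 2 * n\<^sup>2 * b")
  case True
  define \<tau> where "\<tau> = a / (2 * n * b)"
  have "\<tau>\<^sup>2 * b = a\<^sup>2 / (4 * n\<^sup>2 * b)" and "n * (\<tau>\<^sup>2 * b) - \<tau> * a = - a\<^sup>2 / (4 * n * b)"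
    unfolding \<tau>_def using assms by (simp_all add: power2_eq_square field_simps)
  moreover have "a\<^sup>2 / (4 * n\<^sup>2 * b) \<le> 1 / 2" and "2 * L \<le> a\<^sup>2 / (4 * n * b)"
    using True assms by (simp_all add: field_simps)
  moreover have "\<tau> > 0"
    unfolding \<tau>_def using assms by simp
  ultimately show ?thesis
    by (intro exI[of _ \<tau>]) auto
next
  case False
  define \<tau> where "\<tau> = 1 / sqrt (2 * b)"
  have \<tau>: "\<tau> > 0" "\<tau>\<^sup>2 * b = 1 / 2"
    unfolding \<tau>_def using assms by (simp_all add: power_divide)
  have "(n * sqrt (2 * b))\<^sup>2 < a\<^sup>2"
    using False assms by (simp add: power_mult_distrib)
  then have "n * sqrt (2 * b) < a"
    using assms by (simp add: power_less_imp_less_base)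
  then have "n < \<tau> * a"
    unfolding \<tau>_def using assms by (simp add: field_simps)
  moreover have "n * (\<tau>\<^sup>2 * b) = n / 2"
    using \<tau>(2) by simp
  ultimately have "n * (\<tau>\<^sup>2 * b) - \<tau> * a \<le> - 2 * L"
    using assms by linarith
  moreover have "\<tau>\<^sup>2 * b \<le> 1 / 2"
    using \<tau>(2) by simp
  ultimately show ?thesis
    using \<tau>(1) by blast
qed

lemma exp_minus_two_ln: "(p :: real) > 0 \<Longrightarrow> exp (- 2 * ln p) = 1 / p\<^sup>2"
  using exp_of_nat_mult[of 2 "ln p"] by (simp add: exp_minus inverse_eq_divide)

lemma measurable_component_component:
  assumes "r \<in> I" "j \<in> J"
  shows "(\<lambda>x. x r j) \<in> measurable (PiM I (\<lambda>_. PiM J (\<lambda>_. M))) M"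
  by (rule measurable_compose[OF measurable_component_singleton[OF assms(1)]
      measurable_component_singleton[OF assms(2)]])

section \<open>The nodewise regression model\<close>

locale nodewise_regression = prob_space M
  for M :: "'a measure" +
  fixes n :: nat and J :: "nat set" and X :: "'a \<Rightarrow> nat \<Rightarrow> nat \<Rightarrow> real"
    and eps :: "nat \<Rightarrow> 'a \<Rightarrow> real" and \<sigma> \<sigma>X :: real
  assumes finite_J: "finite J"
    and measurable_X: "\<forall>r j. (\<lambda>\<omega>. X \<omega> r j) \<in> borel_measurable M"
    and noise_normal: "\<forall>r<n. distributed M lborel (eps r) (\<lambda>x. ennreal (normal_density 0 \<sigma> x))"
    and noise_indep: "indep_vars (\<lambda>_. borel) eps {..<n}"
    and sigma_pos: "\<sigma> > 0"
    and noise_design_indep: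
      "distr M (PiM {..<n} (\<lambda>_. borel)) (\<lambda>\<omega>. \<lambda>r\<in>{..<n}. eps r \<omega>)
         \<Otimes>\<^sub>M distr M (PiM {..<n} (\<lambda>_. PiM J (\<lambda>_. borel))) (\<lambda>\<omega>. \<lambda>r\<in>{..<n}. \<lambda>j\<in>J. X \<omega> r j)
       = distr M (PiM {..<n} (\<lambda>_. borel) \<Otimes>\<^sub>M PiM {..<n} (\<lambda>_. PiM J (\<lambda>_. borel)))
           (\<lambda>\<omega>. (\<lambda>r\<in>{..<n}. eps r \<omega>, \<lambda>r\<in>{..<n}. \<lambda>j\<in>J. X \<omega> r j))"
    and rows_indep: "indep_vars (\<lambda>_. PiM J (\<lambda>_. borel)) (\<lambda>r \<omega>. \<lambda>j\<in>J. X \<omega> r j) {..<n}"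
    and rows_ident: "\<forall>r<n. distr M (PiM J (\<lambda>_. borel)) (\<lambda>\<omega>. \<lambda>j\<in>J. X \<omega> r j)
      = distr M (PiM J (\<lambda>_. borel)) (\<lambda>\<omega>. \<lambda>j\<in>J. X \<omega> 0 j)"
    and row_sub_gaussian: "\<forall>v t. (\<Sum>j\<in>J. (v j)\<^sup>2) = 1 \<longrightarrow>
      (\<integral>\<^sup>+\<omega>. ennreal (exp (t * (\<Sum>j\<in>J. X \<omega> 0 j * v j))) \<partial>M) \<le> ennreal (exp (t\<^sup>2 * \<sigma>X\<^sup>2 / 2))"
begin

lemma measurable_eps [measurable]: "r < n \<Longrightarrow> eps r \<in> borel_measurable M"
  using distributed_measurable[OF noise_normal[rule_format]] by simp

lemma coordinate_sub_gaussian: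
  assumes "r < n" "j \<in> J"
  shows "(\<integral>\<^sup>+\<omega>. ennreal (exp (\<tau> * X \<omega> r j)) \<partial>M) \<le> ennreal (exp (\<tau>\<^sup>2 * \<sigma>X\<^sup>2 / 2))"
proof -
  define v where "v k = (if k = j then 1 else 0 :: real)" for k
  have v: "(\<Sum>k\<in>J. (v k)\<^sup>2) = 1" "(\<Sum>k\<in>J. X \<omega> 0 k * v k) = X \<omega> 0 j" for \<omega>
    using finite_J assms by (simp_all add: v_def if_distrib if_distribR sum.delta cong: if_cong)
  have row: "(\<lambda>\<omega>. \<lambda>j\<in>J. X \<omega> q j) \<in> measurable M (PiM J (\<lambda>_. borel))" for q
    using measurable_X by (intro measurable_restrict) auto
  have f: "(\<lambda>x. ennreal (exp (\<tau> * x j))) \<in> borel_measurable (PiM J (\<lambda>_. borel :: real measure))"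
    using assms by measurable
  have "(\<integral>\<^sup>+\<omega>. ennreal (exp (\<tau> * X \<omega> r j)) \<partial>M)
      = (\<integral>\<^sup>+x. ennreal (exp (\<tau> * x j)) \<partial>distr M (PiM J (\<lambda>_. borel)) (\<lambda>\<omega>. \<lambda>j\<in>J. X \<omega> r j))"
    using assms f by (simp add: nn_integral_distr[OF row])
  also have "\<dots> = (\<integral>\<^sup>+x. ennreal (exp (\<tau> * x j)) \<partial>distr M (PiM J (\<lambda>_. borel)) (\<lambda>\<omega>. \<lambda>j\<in>J. X \<omega> 0 j))"
    by (simp only: rows_ident[rule_format, OF assms(1)])
  also have "\<dots> = (\<integral>\<^sup>+\<omega>. ennreal (exp (\<tau> * X \<omega> 0 j)) \<partial>M)"
    using assms f by (simp add: nn_integral_distr[OF row])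
  also have "\<dots> \<le> ennreal (exp (\<tau>\<^sup>2 * \<sigma>X\<^sup>2 / 2))"
    using row_sub_gaussian[rule_format, OF v(1), of \<tau>] by (simp add: v(2))
  finally show ?thesis .
qed

lemma nn_integral_indep_noise_design:
  assumes G: "G \<in> borel_measurable (PiM {..<n} (\<lambda>_. borel) \<Otimes>\<^sub>M PiM {..<n} (\<lambda>_. PiM J (\<lambda>_. borel)))"
  shows "(\<integral>\<^sup>+\<omega>. G (\<lambda>r\<in>{..<n}. eps r \<omega>, \<lambda>r\<in>{..<n}. \<lambda>j\<in>J. X \<omega> r j) \<partial>M)
    = (\<integral>\<^sup>+e. \<integral>\<^sup>+\<omega>. G (e, \<lambda>r\<in>{..<n}. \<lambda>j\<in>J. X \<omega> r j) \<partial>M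
        \<partial>distr M (PiM {..<n} (\<lambda>_. borel)) (\<lambda>\<omega>. \<lambda>r\<in>{..<n}. eps r \<omega>))"
proof -
  define PE where "PE = PiM {..<n} (\<lambda>_. borel :: real measure)"
  define PR where "PR = PiM {..<n} (\<lambda>_. PiM J (\<lambda>_. borel :: real measure))"
  define Ev where "Ev = (\<lambda>\<omega>. \<lambda>r\<in>{..<n}. eps r \<omega>)"
  define Rv where "Rv = (\<lambda>\<omega>. \<lambda>r\<in>{..<n}. \<lambda>j\<in>J. X \<omega> r j)"
  have Ev: "Ev \<in> measurable M PE"
    unfolding Ev_def PE_def by (rule measurable_restrict) simp
  have Rv: "Rv \<in> measurable M PR"
    unfolding Rv_def PR_def using measurable_X by (intro measurable_restrict) auto
  have G': "G \<in> borel_measurable (PE \<Otimes>\<^sub>M PR)"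
    using G unfolding PE_def PR_def .
  interpret design: prob_space "distr M PR Rv"
    by (rule prob_space_distr[OF Rv])
  have "(\<integral>\<^sup>+\<omega>. G (Ev \<omega>, Rv \<omega>) \<partial>M) = (\<integral>\<^sup>+z. G z \<partial>distr M (PE \<Otimes>\<^sub>M PR) (\<lambda>\<omega>. (Ev \<omega>, Rv \<omega>)))"
    using Ev Rv G' by (intro nn_integral_distr[symmetric]) auto
  also have "distr M (PE \<Otimes>\<^sub>M PR) (\<lambda>\<omega>. (Ev \<omega>, Rv \<omega>)) = distr M PE Ev \<Otimes>\<^sub>M distr M PR Rv"
    unfolding PE_def PR_def Ev_def Rv_def using noise_design_indep by simp
  also have "(\<integral>\<^sup>+z. G z \<partial>(distr M PE Ev \<Otimes>\<^sub>M distr M PR Rv))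
      = (\<integral>\<^sup>+e. \<integral>\<^sup>+x. G (e, x) \<partial>distr M PR Rv \<partial>distr M PE Ev)"
    using G' by (intro design.nn_integral_fst[symmetric])
      (simp add: measurable_cong_sets[OF sets_pair_measure_cong[OF sets_distr sets_distr] refl])
  also have "\<dots> = (\<integral>\<^sup>+e. \<integral>\<^sup>+\<omega>. G (e, Rv \<omega>) \<partial>M \<partial>distr M PE Ev)"
    using G' Rv by (intro nn_integral_cong) (simp add: nn_integral_distr measurable_Pair2)
  finally show ?thesis
    unfolding PE_def Ev_def Rv_def .
qed

text \<open>Conditionally on the noise, the cross term is sub-Gaussian with variance proxy
  \<open>\<sigma>X\<^sup>2 \<Sum> eps\<^sub>r\<^sup>2\<close>; the independence of noise and design lets us integrate the design first.\<close>

lemma nn_integral_exp_cross_le: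
  assumes j: "j \<in> J" and t: "t\<^sup>2 * \<sigma>X\<^sup>2 * \<sigma>\<^sup>2 \<le> 1 / 2"
  shows "(\<integral>\<^sup>+\<omega>. ennreal (exp (t * (\<Sum>r<n. X \<omega> r j * eps r \<omega>))) \<partial>M)
    \<le> ennreal (exp (real n * (t\<^sup>2 * \<sigma>X\<^sup>2 * \<sigma>\<^sup>2)))"
proof -
  define \<mu> where "\<mu> = t\<^sup>2 * \<sigma>X\<^sup>2 / 2"
  define G where "G z = ennreal (exp (t * (\<Sum>r<n. snd z r j * fst z r)))"
    for z :: "(nat \<Rightarrow> real) \<times> (nat \<Rightarrow> nat \<Rightarrow> real)"
  have "G \<in> borel_measurable (PiM {..<n} (\<lambda>_. borel) \<Otimes>\<^sub>M PiM {..<n} (\<lambda>_. PiM J (\<lambda>_. borel)))"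
    unfolding G_def using measurable_component_component[of _ "{..<n}" j J borel] j by measurable
  from nn_integral_indep_noise_design[OF this]
  have "(\<integral>\<^sup>+\<omega>. ennreal (exp (t * (\<Sum>r<n. X \<omega> r j * eps r \<omega>))) \<partial>M)
      = (\<integral>\<^sup>+e. \<integral>\<^sup>+\<omega>. ennreal (exp (t * (\<Sum>r<n. X \<omega> r j * e r))) \<partial>M
          \<partial>distr M (PiM {..<n} (\<lambda>_. borel)) (\<lambda>\<omega>. \<lambda>r\<in>{..<n}. eps r \<omega>))"
    using j by (simp add: G_def)
  also have "\<dots> \<le> (\<integral>\<^sup>+e. ennreal (exp (\<mu> * (\<Sum>r<n. (e r)\<^sup>2)))
      \<partial>distr M (PiM {..<n} (\<lambda>_. borel)) (\<lambda>\<omega>. \<lambda>r\<in>{..<n}. eps r \<omega>))"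
    unfolding \<mu>_def using j coordinate_sub_gaussian
    by (intro nn_integral_mono nn_integral_exp_row_combination_le[OF rows_indep])
  also have "\<dots> = (\<integral>\<^sup>+\<omega>. ennreal (exp (\<mu> * (\<Sum>r<n. (eps r \<omega>)\<^sup>2))) \<partial>M)"
    by (subst nn_integral_distr) (auto intro: measurable_restrict)
  also have "\<dots> \<le> ennreal (exp (real n * (2 * \<mu> * \<sigma>\<^sup>2)))"
    using t unfolding \<mu>_def
    by (intro nn_integral_exp_sum_sq_normal_le[OF noise_normal noise_indep sigma_pos]) auto
  finally show ?thesis
    unfolding \<mu>_def by simp
qed

lemma measurable_cross_term [measurable]: "(\<lambda>\<omega>. \<Sum>r<n. X \<omega> r j * eps r \<omega>) \<in> borel_measurable M"
  using measurable_X by (auto intro!: borel_measurable_sum borel_measurable_times measurable_eps)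

lemma prob_abs_cross_gt_le:
  assumes j: "j \<in> J" and \<tau>: "\<tau> > 0" "\<tau>\<^sup>2 * \<sigma>X\<^sup>2 * \<sigma>\<^sup>2 \<le> 1 / 2"
  shows "prob {\<omega>\<in>space M. a < \<bar>\<Sum>r<n. X \<omega> r j * eps r \<omega>\<bar>}
    \<le> 2 * exp (real n * (\<tau>\<^sup>2 * \<sigma>X\<^sup>2 * \<sigma>\<^sup>2) - \<tau> * a)"
proof -
  define Z where "Z \<omega> = (\<Sum>r<n. X \<omega> r j * eps r \<omega>)" for \<omega>
  define k where "k = real n * (\<tau>\<^sup>2 * \<sigma>X\<^sup>2 * \<sigma>\<^sup>2)"
  have Z: "Z \<in> borel_measurable M"
    unfolding Z_def by (rule measurable_cross_term)
  have up: "prob {\<omega>\<in>space M. a \<le> Z \<omega>} \<le> exp (k - \<tau> * a)"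
    using nn_integral_exp_cross_le[OF j \<tau>(2)] unfolding Z_def k_def
    by (intro prob_ge_le_exp_of_mgf[OF _ \<tau>(1)]) (use Z in \<open>simp_all add: Z_def\<close>)
  have down: "prob {\<omega>\<in>space M. a \<le> - Z \<omega>} \<le> exp (k - \<tau> * a)"
    using nn_integral_exp_cross_le[OF j, of "- \<tau>"] \<tau>(2) unfolding Z_def k_def
    by (intro prob_ge_le_exp_of_mgf[OF _ \<tau>(1)]) (use Z in \<open>simp_all add: Z_def\<close>)
  have "prob {\<omega>\<in>space M. a < \<bar>Z \<omega>\<bar>} \<le> prob ({\<omega>\<in>space M. a \<le> Z \<omega>} \<union> {\<omega>\<in>space M. a \<le> - Z \<omega>})"
    using Z by (intro finite_measure_mono) auto
  also have "\<dots> \<le> prob {\<omega>\<in>space M. a \<le> Z \<omega>} + prob {\<omega>\<in>space M. a \<le> - Z \<omega>}"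
    using Z by (intro measure_Un_le) auto
  finally show ?thesis
    using up down unfolding Z_def k_def by simp
qed

lemma cross_terms_small_event:
  fixes p :: nat
  assumes J: "card J \<le> p" and p: "p \<ge> 1" and n: "4 * ln p \<le> n" "n \<ge> 1"
    and pos: "\<xi> > 0" "\<sigma>X > 0"
    and tuning: "32 * \<sigma>X\<^sup>2 * \<sigma>\<^sup>2 * (n * ln p) \<le> \<xi>\<^sup>2"
  shows "\<exists>E\<in>sets M. 1 - 2 / p \<le> prob E \<and> (\<forall>\<omega>\<in>E. \<forall>j\<in>J. \<bar>\<Sum>r<n. X \<omega> r j * eps r \<omega>\<bar> \<le> \<xi> / 2)"
proof -
  define B where "B j = {\<omega>\<in>space M. \<xi> / 2 < \<bar>\<Sum>r<n. X \<omega> r j * eps r \<omega>\<bar>}" for j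
  have B_sets: "B j \<in> sets M" for j
    unfolding B_def by measurable
  have B_prob: "prob (B j) \<le> 2 / p\<^sup>2" if "j \<in> J" for j
  proof -
    obtain \<tau> where \<tau>: "\<tau> > 0" "\<tau>\<^sup>2 * (\<sigma>X\<^sup>2 * \<sigma>\<^sup>2) \<le> 1 / 2"
      and exponent: "n * (\<tau>\<^sup>2 * (\<sigma>X\<^sup>2 * \<sigma>\<^sup>2)) - \<tau> * (\<xi> / 2) \<le> - 2 * ln p"
    proof (rule exists_Chernoff_exponent[THEN exE])
      show "8 * (\<sigma>X\<^sup>2 * \<sigma>\<^sup>2) * n * ln p \<le> (\<xi> / 2)\<^sup>2"
        using tuning by (simp add: power_divide mult_ac)
    qed (use n pos p sigma_pos in auto)
    have "\<tau>\<^sup>2 * \<sigma>X\<^sup>2 * \<sigma>\<^sup>2 \<le> 1 / 2"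
      using \<tau>(2) by (simp add: mult.assoc)
    then have "prob (B j) \<le> 2 * exp (n * (\<tau>\<^sup>2 * \<sigma>X\<^sup>2 * \<sigma>\<^sup>2) - \<tau> * (\<xi> / 2))"
      unfolding B_def by (rule prob_abs_cross_gt_le[OF that \<tau>(1)])
    also have "\<dots> \<le> 2 * exp (- 2 * ln p)"
      using exponent by (simp add: mult.assoc)
    finally show ?thesis
      using p exp_minus_two_ln[of "real p"] by simp
  qed
  have "prob (\<Union>j\<in>J. B j) \<le> (\<Sum>j\<in>J. prob (B j))"
    using B_sets by (intro measure_UNION_le[OF finite_J]) auto
  also have "\<dots> \<le> (\<Sum>j\<in>J. 2 / p\<^sup>2)"
    using B_prob by (rule sum_mono)
  also have "\<dots> = real (card J) * (2 / p\<^sup>2)"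
    by simp
  also have "\<dots> \<le> p * (2 / p\<^sup>2)"
    using J by (intro mult_right_mono) auto
  finally have "prob (\<Union>j\<in>J. B j) \<le> 2 / p"
    using p by (simp add: power2_eq_square)
  then have "1 - 2 / p \<le> prob (space M - (\<Union>j\<in>J. B j))"
    using B_sets finite_J by (subst prob_compl) auto
  moreover have "\<forall>\<omega>\<in>space M - (\<Union>j\<in>J. B j). \<forall>j\<in>J. \<bar>\<Sum>r<n. X \<omega> r j * eps r \<omega>\<bar> \<le> \<xi> / 2"
    unfolding B_def by auto
  ultimately show ?thesis
    using B_sets finite_J by (intro bexI[of _ "space M - (\<Union>j\<in>J. B j)"]) auto
qed

lemma noise_norm_small_event:
  fixes p :: nat
  assumes p: "p \<ge> 1" and n: "n < 4 * ln p" and tuning: "12 * \<sigma>\<^sup>2 * ln p \<le> \<xi>\<^sup>2 / n"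
  shows "\<exists>E\<in>sets M. 1 - 1 / p \<le> prob E \<and> (\<forall>\<omega>\<in>E. (\<Sum>r<n. (eps r \<omega>)\<^sup>2) \<le> \<xi>\<^sup>2 / n)"
proof -
  define B where "B = {\<omega>\<in>space M. 12 * \<sigma>\<^sup>2 * ln p \<le> (\<Sum>r<n. (eps r \<omega>)\<^sup>2)}"
  have B_sets: "B \<in> sets M"
    unfolding B_def by measurable
  have "prob B \<le> exp (real n / 2 - 12 * \<sigma>\<^sup>2 * ln p / (4 * \<sigma>\<^sup>2))"
    unfolding B_def by (rule prob_sum_sq_normal_ge_le[OF noise_normal noise_indep sigma_pos])
  also have "\<dots> \<le> exp (- ln p)"
    using n sigma_pos by simp
  also have "\<dots> = 1 / p"
    using p by (simp add: exp_minus inverse_eq_divide)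
  finally have "1 - 1 / p \<le> prob (space M - B)"
    using B_sets by (subst prob_compl) auto
  moreover have "\<forall>\<omega>\<in>space M - B. (\<Sum>r<n. (eps r \<omega>)\<^sup>2) \<le> \<xi>\<^sup>2 / n"
    using tuning unfolding B_def by auto
  ultimately show ?thesis
    using B_sets by (intro bexI[of _ "space M - B"]) auto
qed

lemma noise_event:
  fixes p :: nat
  assumes J: "card J \<le> p" and p: "p \<ge> 1" and n: "n \<ge> 1" and pos: "\<xi> > 0" "\<sigma>X > 0"
    and tuning: "(32 * \<sigma>X\<^sup>2 + 12) * \<sigma>\<^sup>2 * (n * ln p) \<le> \<xi>\<^sup>2"
  shows "\<exists>E\<in>sets M. 1 - 2 / p \<le> prob E \<and> (\<forall>\<omega>\<in>E.
    (\<forall>j\<in>J. \<bar>\<Sum>r<n. X \<omega> r j * eps r \<omega>\<bar> \<le> \<xi> / 2) \<or> (\<Sum>r<n. (eps r \<omega>)\<^sup>2) \<le> \<xi>\<^sup>2 / n)"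
proof (cases "4 * ln p \<le> n")
  case True
  have "32 * \<sigma>X\<^sup>2 * \<sigma>\<^sup>2 * (n * ln p) \<le> (32 * \<sigma>X\<^sup>2 + 12) * \<sigma>\<^sup>2 * (n * ln p)"
    using p by (intro mult_right_mono) auto
  then show ?thesis
    using cross_terms_small_event[OF J p True n pos] tuning by fastforce
next
  case False
  have "12 * \<sigma>\<^sup>2 * (n * ln p) \<le> (32 * \<sigma>X\<^sup>2 + 12) * \<sigma>\<^sup>2 * (n * ln p)"
    using p by (intro mult_right_mono) auto
  then have "12 * \<sigma>\<^sup>2 * ln p \<le> \<xi>\<^sup>2 / n"
    using tuning n by (simp add: field_simps)
  then obtain E where "E \<in> sets M" "1 - 1 / p \<le> prob E" "\<forall>\<omega>\<in>E. (\<Sum>r<n. (eps r \<omega>)\<^sup>2) \<le> \<xi>\<^sup>2 / n"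
    using noise_norm_small_event[OF p] False by fastforce
  moreover have "1 / real p \<le> 2 / p"
    using p by (simp add: divide_right_mono)
  ultimately show ?thesis
    by (intro bexI[of _ E]) auto
qed

end

text \<open>The two summands serve the two regimes: \<open>32 \<sigma>X\<^sup>2\<close> the cross terms when
  \<open>n \<ge> 4 ln p\<close>, \<open>12\<close> the noise norm when \<open>n < 4 ln p\<close>.\<close>
definition enet_tuning_constant :: "real \<Rightarrow> real \<Rightarrow> real" where
  "enet_tuning_constant \<sigma>X Kii = sqrt ((32 * \<sigma>X\<^sup>2 + 12) / Kii)"

lemma enet_tuning_constant_pos: "Kii > 0 \<Longrightarrow> enet_tuning_constant \<sigma>X Kii > 0"
  unfolding enet_tuning_constant_def by (simp add: add_nonneg_pos)

lemma enet_l1_error_bound_whp: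
  fixes M :: "'a measure" and X :: "'a \<Rightarrow> nat \<Rightarrow> nat \<Rightarrow> real" and \<beta>s pw :: "nat \<Rightarrow> real"
    and n p i :: nat
  defines "J \<equiv> other_idx p i" and "S \<equiv> supp_set p i \<beta>s"
    and "pu \<equiv> pbar p i \<beta>s pw" and "pl \<equiv> plow p i \<beta>s pw"
    and "eps \<equiv> \<lambda>r \<omega>. X \<omega> r i - (\<Sum>j\<in>other_idx p i. X \<omega> r j * \<beta>s j)"
  assumes model: "nodewise_regression M n J X eps (sqrt (1 / Kii)) \<sigma>X"
    and pos: "Kii > 0" "\<sigma>X > 0" "\<phi> > 0" "\<sigma>1 > 0" "\<xi>0 > 0" "n \<ge> 1" "p \<ge> 3"
    and signal: "S \<noteq> {}" "\<forall>j\<in>S. \<bar>\<beta>s j\<bar> \<le> B"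
    and weights: "\<forall>j\<in>J. 0 \<le> pw j \<and> pw j \<le> 1" "pu < 1 / 2"
    and compat: "AE \<omega> in M. \<forall>\<delta>. (\<Sum>j\<in>J - S. \<bar>\<delta> j\<bar>) \<le> (5 - 2 * pl) / (1 - 2 * pu) * (\<Sum>j\<in>S. \<bar>\<delta> j\<bar>) \<longrightarrow>
      real n * \<phi>\<^sup>2 / real (card S) * (\<Sum>j\<in>S. \<bar>\<delta> j\<bar>)\<^sup>2 \<le> (\<Sum>r<n. (\<Sum>j\<in>J. X \<omega> r j * \<delta> j)\<^sup>2)"
    and tuning: "\<xi>0 \<ge> enet_tuning_constant \<sigma>X Kii * sqrt (real n * ln (real p))" "\<xi>0 \<ge> B * Kii / \<sigma>1\<^sup>2"
  shows "\<exists>E\<in>sets M. 1 - 2 * real p powr - 1 \<le> measure M E \<and>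
    (\<forall>\<omega>\<in>E. \<forall>\<beta>hat. is_enet_estimator n p i Kii \<xi>0 \<sigma>1 pw (X \<omega>) \<beta>hat \<longrightarrow>
      (\<Sum>j\<in>J. \<bar>\<beta>hat j - \<beta>s j\<bar>) \<le> enet_error_factor \<phi> pl pu * real (card S) * \<xi>0 / real n)"
proof -
  interpret nodewise_regression M n J X eps "sqrt (1 / Kii)" \<sigma>X
    by (rule model)
  obtain N where N: "N \<in> null_sets M" and compat_N: "\<And>\<omega>. \<omega> \<in> space M - N \<Longrightarrow> \<forall>\<delta>.
      (\<Sum>j\<in>J - S. \<bar>\<delta> j\<bar>) \<le> cone_constant pl pu * (\<Sum>j\<in>S. \<bar>\<delta> j\<bar>) \<longrightarrow>
      real n * \<phi>\<^sup>2 / real (card S) * (\<Sum>j\<in>S. \<bar>\<delta> j\<bar>)\<^sup>2 \<le> (\<Sum>r<n. (\<Sum>j\<in>J. X \<omega> r j * \<delta> j)\<^sup>2)"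
    using AE_E3[OF compat] unfolding cone_constant_def by blast
  have "0 \<le> ln (real p)"
    using pos by simp
  then have "(enet_tuning_constant \<sigma>X Kii * sqrt (real n * ln (real p)))\<^sup>2 \<le> \<xi>0\<^sup>2"
    using tuning(1) pos by (intro power_mono) (auto simp: enet_tuning_constant_def)
  then have "(32 * \<sigma>X\<^sup>2 + 12) * (sqrt (1 / Kii))\<^sup>2 * (real n * ln (real p)) \<le> \<xi>0\<^sup>2"
    using pos \<open>0 \<le> ln (real p)\<close> by (simp add: enet_tuning_constant_def power_mult_distrib)
  then obtain E where E: "E \<in> sets M" "1 - 2 / p \<le> prob E" and noise: "\<forall>\<omega>\<in>E.
      (\<forall>j\<in>J. \<bar>\<Sum>r<n. X \<omega> r j * eps r \<omega>\<bar> \<le> \<xi>0 / 2) \<or> (\<Sum>r<n. (eps r \<omega>)\<^sup>2) \<le> \<xi>0\<^sup>2 / n"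
    using noise_event[of p \<xi>0] card_other_idx_le pos unfolding J_def by fastforce
  have "prob (E - N) = prob E"
    using E N by (intro measure_Diff_null_set) auto
  moreover have "real p powr - 1 = 1 / p"
    using pos by (simp add: powr_neg_one)
  moreover have "(\<Sum>j\<in>J. \<bar>\<beta>hat j - \<beta>s j\<bar>) \<le> enet_error_factor \<phi> pl pu * real (card S) * \<xi>0 / real n"
    if \<omega>: "\<omega> \<in> E - N" and est: "is_enet_estimator n p i Kii \<xi>0 \<sigma>1 pw (X \<omega>) \<beta>hat" for \<omega> \<beta>hat
  proof -
    have "\<forall>\<delta>. (\<Sum>j\<in>J - S. \<bar>\<delta> j\<bar>) \<le> cone_constant pl pu * (\<Sum>j\<in>S. \<bar>\<delta> j\<bar>) \<longrightarrow>
        real n * \<phi>\<^sup>2 / real (card S) * (\<Sum>j\<in>S. \<bar>\<delta> j\<bar>)\<^sup>2 \<le> (\<Sum>r<n. (\<Sum>j\<in>J. X \<omega> r j * \<delta> j)\<^sup>2)"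
      using compat_N \<omega> E sets.sets_into_space by blast
    moreover have "(\<forall>j\<in>J. \<bar>\<Sum>r<n. X \<omega> r j * eps r \<omega>\<bar> \<le> \<xi>0 / 2) \<or> (\<Sum>r<n. (eps r \<omega>)\<^sup>2) \<le> \<xi>0\<^sup>2 / n"
      using noise \<omega> by blast
    ultimately show ?thesis
      using enet_l1_error_bound[OF est pos(1,4,5) tuning(2) pos(6,3)] signal weights
      unfolding J_def S_def pl_def pu_def eps_def by blast
  qed
  ultimately show ?thesis
    using E N by (intro bexI[of _ "E - N"]) auto
qed

theorem theorem1:
  "\<exists>F :: real \<Rightarrow> real \<Rightarrow> real \<Rightarrow> real. (\<forall>a b d. F a b d > 0) \<and>
   (\<forall>(\<sigma>X::real) (\<kappa>lo::real) (\<kappa>hi::real) (B::real) (\<phi>::real) (Kii::real).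
     \<sigma>X > 0 \<and> \<kappa>lo > 0 \<and> \<kappa>lo \<le> \<kappa>hi \<and> B > 0 \<and> \<phi> > 0 \<and> Kii > 0 \<longrightarrow>
     (\<exists>C::real. C > 0 \<and> (\<exists>c::real. c > 0 \<and>
       (\<forall>(n::nat) (p::nat) (i::nat) (M::'a measure) (X::'a \<Rightarrow> nat \<Rightarrow> nat \<Rightarrow> real)
          (\<beta>star::nat \<Rightarrow> real) (Sig::nat \<Rightarrow> nat \<Rightarrow> real) (pw::nat \<Rightarrow> real) (\<sigma>1::real) (\<xi>0::real).
         let J = other_idx p i;
             S = supp_set p i \<beta>star;
             s = card S;
             pu = pbar p i \<beta>star pw;
             pl = plow p i \<beta>star pw;
             L = (5 - 2 * pl) / (1 - 2 * pu);
             eps = (\<lambda>r \<omega>. X \<omega> r i - (\<Sum>j\<in>J. X \<omega> r j * \<beta>star j));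
             row = (\<lambda>r \<omega>. \<lambda>j\<in>J. X \<omega> r j)
         in
         n \<ge> 1 \<and> p \<ge> 3 \<and> i < p \<and> prob_space M \<and>
         (\<forall>r j. (\<lambda>\<omega>. X \<omega> r j) \<in> borel_measurable M) \<and>
         \<comment> \<open>nodewise Gaussian regression model, noise independent of the design\<close>
         (\<forall>r<n. distributed M lborel (eps r) (normal_density 0 (sqrt (1 / Kii)))) \<and>
         prob_space.indep_vars M (\<lambda>_. borel) eps {..<n} \<and>
         distr M (PiM {..<n} (\<lambda>_. borel)) (\<lambda>\<omega>. \<lambda>r\<in>{..<n}. eps r \<omega>)
           \<Otimes>\<^sub>M distr M (PiM {..<n} (\<lambda>_. PiM J (\<lambda>_. borel))) (\<lambda>\<omega>. \<lambda>r\<in>{..<n}. row r \<omega>)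
         = distr M (PiM {..<n} (\<lambda>_. borel) \<Otimes>\<^sub>M PiM {..<n} (\<lambda>_. PiM J (\<lambda>_. borel)))
             (\<lambda>\<omega>. (\<lambda>r\<in>{..<n}. eps r \<omega>, \<lambda>r\<in>{..<n}. row r \<omega>)) \<and>
         \<comment> \<open>(A1) i.i.d. centered sub-Gaussian rows with covariance Sig\<close>
         prob_space.indep_vars M (\<lambda>_. PiM J (\<lambda>_. borel)) row {..<n} \<and>
         (\<forall>r<n. distr M (PiM J (\<lambda>_. borel)) (row r) = distr M (PiM J (\<lambda>_. borel)) (row 0)) \<and>
         (\<forall>r<n. \<forall>j\<in>J. integrable M (\<lambda>\<omega>. X \<omega> r j) \<and> prob_space.expectation M (\<lambda>\<omega>. X \<omega> r j) = 0) \<and>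
         (\<forall>j\<in>J. \<forall>k\<in>J. integrable M (\<lambda>\<omega>. X \<omega> 0 j * X \<omega> 0 k) \<and>
             Sig j k = prob_space.expectation M (\<lambda>\<omega>. X \<omega> 0 j * X \<omega> 0 k)) \<and>
         (\<forall>v t. (\<Sum>j\<in>J. (v j)\<^sup>2) = 1 \<longrightarrow>
             (\<integral>\<^sup>+ \<omega>. ennreal (exp (t * (\<Sum>j\<in>J. X \<omega> 0 j * v j))) \<partial>M)
               \<le> ennreal (exp (t\<^sup>2 * \<sigma>X\<^sup>2 / 2))) \<and>
         (\<forall>lam. is_eigenvalue_on J Sig lam \<longrightarrow> \<kappa>lo \<le> lam \<and> lam \<le> \<kappa>hi) \<and>
         \<comment> \<open>(A2) sparsity and bounded signal\<close>
         S \<noteq> {} \<and> (\<forall>j\<in>S. \<bar>\<beta>star j\<bar> \<le> B) \<and>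
         \<comment> \<open>weights and hyperparameters\<close>
         (\<forall>j\<in>J. 0 \<le> pw j \<and> pw j \<le> 1) \<and> \<sigma>1 > 0 \<and> \<xi>0 > 0 \<and>
         \<comment> \<open>(A3) separation of weights\<close>
         pu < 1 / 2 \<and>
         \<comment> \<open>(A4) compatibility condition (almost surely)\<close>
         (AE \<omega> in M. \<forall>\<delta>. (\<Sum>j\<in>J - S. \<bar>\<delta> j\<bar>) \<le> L * (\<Sum>j\<in>S. \<bar>\<delta> j\<bar>) \<longrightarrow>
             (\<Sum>r<n. (\<Sum>j\<in>J. X \<omega> r j * \<delta> j)\<^sup>2) \<ge> real n * \<phi>\<^sup>2 / real s * (\<Sum>j\<in>S. \<bar>\<delta> j\<bar>)\<^sup>2) \<and>
         \<comment> \<open>tuning conditions\<close>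
         \<xi>0 \<ge> C * sqrt (real n * ln (real p)) \<and> \<xi>0 \<ge> B * Kii / \<sigma>1\<^sup>2
         \<longrightarrow>
         (\<exists>E\<in>sets M. measure M E \<ge> 1 - 2 * real p powr (- c) \<and>
            (\<forall>\<omega>\<in>E. \<forall>\<beta>hat. is_enet_estimator n p i Kii \<xi>0 \<sigma>1 pw (X \<omega>) \<beta>hat \<longrightarrow>
               (\<Sum>j\<in>J. \<bar>\<beta>hat j - \<beta>star j\<bar>) \<le> F \<phi> pl pu * real s * \<xi>0 / real n))))))"
  unfolding Let_def
proof (intro exI[of _ enet_error_factor] conjI allI impI enet_error_factor_pos, elim conjE, goal_cases)
  case (1 \<sigma>X \<kappa>lo \<kappa>hi B \<phi> Kii)
  note constants = this
  show ?case
  proof (rule exI[of _ "enet_tuning_constant \<sigma>X Kii"], intro conjI exI[of _ "1::real"] allI impI, goal_cases)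
    case 1
    show ?case
      using constants by (simp add: enet_tuning_constant_pos)
  next
    case 2
    show ?case
      by simp
  next
    case (3 n p i M X \<beta>s Sig pw \<sigma>1 \<xi>0)
    have "sqrt (1 / Kii) > 0"
      using constants by simp
    then have model: "nodewise_regression M n (other_idx p i) X
        (\<lambda>r \<omega>. X \<omega> r i - (\<Sum>j\<in>other_idx p i. X \<omega> r j * \<beta>s j)) (sqrt (1 / Kii)) \<sigma>X"
      by (insert 3, elim conjE, intro nodewise_regression.intro nodewise_regression_axioms.intro)
        (assumption | rule finite_other_idx)+
    show ?case
      by (insert 3 constants, elim conjE) (rule enet_l1_error_bound_whp[OF model]; assumption)
  qed
qed

end
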